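(* Let $G$ be a graph, $V(G)=V_1\uplus\dots\uplus V_\ell$ a partition, $Z\subseteq V(G)$, and let $(\mathfrak T,\gamma)$ be the rooted decomposition of $G-Z$ into $2$-connected components. If $I_1,I_2$ are two distinct segments, then $B_Z(I_1)\cap B_Z(I_2)=\emptyset$.
   Context: A graph is 2-connected if it is connected and has no cut vertex (so $K_1$ and $K_2$ count as 2-connected); a 2-connected component of a graph is an inclusion-maximal vertex set inducing a 2-connected subgraph. Rooted decomposition: $\mathfrak T$ is a forest whose nodes $t$ correspond to the 2-connected components $\gamma(t)\subseteq V(G)\setminus Z$ of $G-Z$; it is obtained from the block-cut forest of $G-Z$ by fixing, in each connected component, a root block (say the lexicographically smallest), and letting the parent of a non-root block $C$ be the block containing the cut vertex that separates $C$ from the root (i.e. the grandparent of $C$ in the rooted block-cut forest). An $i$-segment is a connected component of $G[V_i\setminus Z]$; a segment is an $i$-segment for some $i$. For a segment $I$, $r_Z(I)$ is the unique node $t$ of $\mathfrak T$ closest to a root with $I\cap\gamma(t)\neq\emptyset$, and the body is $B_Z(I)=\{t\in V(\mathfrak T)\setminus\{r_Z(I)\}: I\cap\gamma(t)\ne\emptyset\}$. *)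

theory Defs
  imports Main
begin

text \<open>Simple graphs are given by a vertex set and a symmetric, irreflexive edge
predicate E. All notions below are relative to an induced vertex subset S.\<close>

definition conn :: "('a \<Rightarrow> 'a \<Rightarrow> bool) \<Rightarrow> 'a set \<Rightarrow> bool" where
  "conn E S \<longleftrightarrow> S \<noteq> {} \<and>
     (\<forall>x\<in>S. \<forall>y\<in>S. (\<lambda>a b. E a b \<and> a \<in> S \<and> b \<in> S)\<^sup>*\<^sup>* x y)"

definition comps :: "('a \<Rightarrow> 'a \<Rightarrow> bool) \<Rightarrow> 'a set \<Rightarrow> 'a set set" where
  "comps E S = {C. C \<subseteq> S \<and> conn E C \<and>
     (\<forall>D. C \<subseteq> D \<and> D \<subseteq> S \<and> conn E D \<longrightarrow> D = C)}"

text \<open>2-connected: connected and no cut vertex (K1 and K2 count as 2-connected).\<close>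
definition biconn :: "('a \<Rightarrow> 'a \<Rightarrow> bool) \<Rightarrow> 'a set \<Rightarrow> bool" where
  "biconn E S \<longleftrightarrow> conn E S \<and> (\<forall>v\<in>S. S - {v} \<noteq> {} \<longrightarrow> conn E (S - {v}))"

definition blocks :: "('a \<Rightarrow> 'a \<Rightarrow> bool) \<Rightarrow> 'a set \<Rightarrow> 'a set set" where
  "blocks E S = {C. C \<subseteq> S \<and> biconn E C \<and>
     (\<forall>D. C \<subseteq> D \<and> D \<subseteq> S \<and> biconn E D \<longrightarrow> D = C)}"

definition cut_vertex :: "('a \<Rightarrow> 'a \<Rightarrow> bool) \<Rightarrow> 'a set \<Rightarrow> 'a \<Rightarrow> bool" where
  "cut_vertex E S v \<longleftrightarrow> v \<in> S \<and> card (comps E (S - {v})) > card (comps E S)"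

definition bc_adj :: "('a \<Rightarrow> 'a \<Rightarrow> bool) \<Rightarrow> 'a set \<Rightarrow> ('a set + 'a) \<Rightarrow> ('a set + 'a) \<Rightarrow> bool" where
  "bc_adj E S x y \<longleftrightarrow> (\<exists>B v. (x = Inl B \<and> y = Inr v \<or> x = Inr v \<and> y = Inl B) \<and>
      B \<in> blocks E S \<and> cut_vertex E S v \<and> v \<in> B)"

definition bc_dist :: "('a \<Rightarrow> 'a \<Rightarrow> bool) \<Rightarrow> 'a set \<Rightarrow> ('a set + 'a) \<Rightarrow> ('a set + 'a) \<Rightarrow> nat" where
  "bc_dist E S x y = (LEAST n. (bc_adj E S ^^ n) x y)"

definition roots_ok :: "('a \<Rightarrow> 'a \<Rightarrow> bool) \<Rightarrow> 'a set \<Rightarrow> 'a set set \<Rightarrow> bool" where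
  "roots_ok E S Rts \<longleftrightarrow> Rts \<subseteq> blocks E S \<and>
     (\<forall>C\<in>blocks E S. \<exists>!R. R \<in> Rts \<and> (bc_adj E S)\<^sup>*\<^sup>* (Inl C) (Inl R))"

text \<open>Parent in the rooted decomposition: the grandparent in the rooted block-cut forest.\<close>
definition tparent :: "('a \<Rightarrow> 'a \<Rightarrow> bool) \<Rightarrow> 'a set \<Rightarrow> 'a set set \<Rightarrow> 'a set \<Rightarrow> 'a set \<Rightarrow> bool" where
  "tparent E S Rts C P \<longleftrightarrow> C \<in> blocks E S \<and> P \<in> blocks E S \<and> C \<notin> Rts \<and>
     (\<exists>R\<in>Rts. (bc_adj E S)\<^sup>*\<^sup>* (Inl C) (Inl R) \<and>
       (\<exists>v. bc_adj E S (Inl C) (Inr v) \<and> bc_adj E S (Inr v) (Inl P) \<and>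
            bc_dist E S (Inl R) (Inr v) + 1 = bc_dist E S (Inl R) (Inl C) \<and>
            bc_dist E S (Inl R) (Inl P) + 1 = bc_dist E S (Inl R) (Inr v)))"

definition tdepth :: "('a \<Rightarrow> 'a \<Rightarrow> bool) \<Rightarrow> 'a set \<Rightarrow> 'a set set \<Rightarrow> 'a set \<Rightarrow> nat" where
  "tdepth E S Rts C = (LEAST n. \<exists>R\<in>Rts. (tparent E S Rts ^^ n) C R)"

definition is_segment :: "('a \<Rightarrow> 'a \<Rightarrow> bool) \<Rightarrow> (nat \<Rightarrow> 'a set) \<Rightarrow> nat \<Rightarrow> 'a set \<Rightarrow> 'a set \<Rightarrow> bool" where
  "is_segment E Vs l Z I \<longleftrightarrow> (\<exists>i\<in>{1..l}. I \<in> comps E (Vs i - Z))"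

definition seg_root :: "('a \<Rightarrow> 'a \<Rightarrow> bool) \<Rightarrow> 'a set \<Rightarrow> 'a set set \<Rightarrow> 'a set \<Rightarrow> 'a set" where
  "seg_root E S Rts I = (THE t. t \<in> blocks E S \<and> I \<inter> t \<noteq> {} \<and>
     (\<forall>t'\<in>blocks E S. I \<inter> t' \<noteq> {} \<and> t' \<noteq> t \<longrightarrow> tdepth E S Rts t < tdepth E S Rts t'))"

definition seg_body :: "('a \<Rightarrow> 'a \<Rightarrow> bool) \<Rightarrow> 'a set \<Rightarrow> 'a set set \<Rightarrow> 'a set \<Rightarrow> 'a set set" where
  "seg_body E S Rts I = {t \<in> blocks E S. t \<noteq> seg_root E S Rts I \<and> I \<inter> t \<noteq> {}}"

end

theory Submission
  imports Defs "HOL-Library.Transitive_Closure_Table"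
begin

text \<open>Let t be a block in both bodies and R the root of its component. In the block-cut
forest a node has at most one neighbour one level closer to R: two of them would yield a walk
around a cut vertex v between two of its blocks avoiding v, and then those blocks together with
the walk would form a larger 2-connected set. Consequently t has at most one parent cut vertex,
and a walk in G - Z that starts in t and avoids it stays in the subtree below t, whose other
blocks are all deeper than t. So a segment meeting t but not its parent cut vertex has root t.
As t lies in the bodies of I1 and I2, both segments contain the parent cut vertex of t,
contradicting the disjointness of distinct segments.\<close>

definition induced_adj :: "('a \<Rightarrow> 'a \<Rightarrow> bool) \<Rightarrow> 'a set \<Rightarrow> 'a \<Rightarrow> 'a \<Rightarrow> bool" where
  "induced_adj E T = (\<lambda>a b. E a b \<and> a \<in> T \<and> b \<in> T)"

abbreviation reach :: "('a \<Rightarrow> 'a \<Rightarrow> bool) \<Rightarrow> 'a set \<Rightarrow> 'a \<Rightarrow> 'a \<Rightarrow> bool" where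
  "reach E T \<equiv> (induced_adj E T)\<^sup>*\<^sup>*"

lemma induced_adj_iff: "induced_adj E T a b \<longleftrightarrow> E a b \<and> a \<in> T \<and> b \<in> T"
  by (simp add: induced_adj_def)

lemma conn_iff_reach: "conn E T \<longleftrightarrow> T \<noteq> {} \<and> (\<forall>x\<in>T. \<forall>y\<in>T. reach E T x y)"
  by (simp add: conn_def induced_adj_def)

lemma reach_mono: "T \<subseteq> T' \<Longrightarrow> reach E T x y \<Longrightarrow> reach E T' x y"
  by (rule mono_rtranclp[rule_format, of "induced_adj E T"]) (auto simp: induced_adj_iff)

lemma reach_closed: "reach E T x y \<Longrightarrow> x \<in> T \<Longrightarrow> y \<in> T"
  by (induction rule: rtranclp_induct) (auto simp: induced_adj_iff)

lemma conn_Diff_if_biconn: "biconn E A \<Longrightarrow> A - {w} \<noteq> {} \<Longrightarrow> conn E (A - {w})"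
  by (cases "w \<in> A") (auto simp: biconn_def)

lemma set_walk_subset:
  "successively (induced_adj E T) L \<Longrightarrow> hd L \<in> T \<Longrightarrow> set L \<subseteq> T"
  by (induction L) (auto simp: successively_Cons induced_adj_iff)

lemma obtain_distinct_walk:
  assumes "r\<^sup>*\<^sup>* x y"
  obtains L where "successively r L" "distinct L" "L \<noteq> []" "hd L = x" "last L = y"
proof -
  obtain xs where "rtrancl_path r x xs y" "distinct (x # xs)"
    using assms rtrancl_path_distinct rtranclp_eq_rtrancl_path by metis
  moreover have "rtrancl_path r x xs y \<Longrightarrow> successively r (x # xs) \<and> last (x # xs) = y"
    by (induction rule: rtrancl_path.induct) (auto simp: successively_Cons)
  ultimately show thesis using that[of "x # xs"] by simp
qed

lemma successively_split_at:
  assumes "successively r L" "distinct L"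
  obtains pre post where "set L - {w} = set pre \<union> set post"
    "successively r pre" "successively r post"
    "pre \<noteq> [] \<Longrightarrow> hd pre = hd L" "post \<noteq> [] \<Longrightarrow> last post = last L"
proof (cases "w \<in> set L")
  case True
  then obtain pre post where L: "L = pre @ w # post" by (meson split_list)
  with assms show thesis
    by (intro that[of pre post]) (auto simp: successively_append_iff successively_Cons)
next
  case False
  with assms show thesis by (intro that[of L "[]"]) auto
qed

definition rel_dist :: "('b \<Rightarrow> 'b \<Rightarrow> bool) \<Rightarrow> 'b \<Rightarrow> 'b \<Rightarrow> nat" where
  "rel_dist r a x = (LEAST n. (r ^^ n) a x)"

lemma relpowp_rel_dist: "r\<^sup>*\<^sup>* a x \<Longrightarrow> (r ^^ rel_dist r a x) a x"
  unfolding rel_dist_def by (meson LeastI_ex rtranclp_imp_relpowp)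

lemma rel_dist_le: "(r ^^ n) a x \<Longrightarrow> rel_dist r a x \<le> n"
  unfolding rel_dist_def by (rule Least_le)

lemma rel_dist_self [simp]: "rel_dist r a a = 0"
  using rel_dist_le[where n = 0 and r = r] by simp

lemma rel_dist_eq_0_iff: "r\<^sup>*\<^sup>* a x \<Longrightarrow> rel_dist r a x = 0 \<longleftrightarrow> x = a"
  using relpowp_rel_dist[of r a x] by auto

lemma rel_dist_step: "r\<^sup>*\<^sup>* a x \<Longrightarrow> r x y \<Longrightarrow> rel_dist r a y \<le> Suc (rel_dist r a x)"
  by (meson relpowp_rel_dist rel_dist_le relpowp_Suc_I)

lemma rel_dist_triangle:
  "r\<^sup>*\<^sup>* a b \<Longrightarrow> r\<^sup>*\<^sup>* b x \<Longrightarrow> rel_dist r a x \<le> rel_dist r a b + rel_dist r b x"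
proof -
  assume ab: "r\<^sup>*\<^sup>* a b" and bx: "r\<^sup>*\<^sup>* b x"
  have "(r ^^ (rel_dist r a b + rel_dist r b x)) a x"
    using relpowp_rel_dist[OF ab] relpowp_rel_dist[OF bx] unfolding relpowp_add by auto
  then show ?thesis by (rule rel_dist_le)
qed

lemma rel_dist_SucE:
  assumes "r\<^sup>*\<^sup>* a x" "rel_dist r a x = Suc m"
  obtains y where "r\<^sup>*\<^sup>* a y" "r y x" "rel_dist r a y = m"
proof -
  have "(r ^^ Suc m) a x" using relpowp_rel_dist[OF assms(1)] assms(2) by simp
  then obtain y where y: "(r ^^ m) a y" "r y x" by (rule relpowp_Suc_E)
  have "r\<^sup>*\<^sup>* a y" using y(1) by (rule relpowp_imp_rtranclp)
  moreover have "rel_dist r a y = m"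
    using rel_dist_le[OF y(1)] rel_dist_step[OF \<open>r\<^sup>*\<^sup>* a y\<close> y(2)] assms(2) by linarith
  ultimately show thesis using y(2) that by blast
qed

definition avoiding :: "('b \<Rightarrow> 'b \<Rightarrow> bool) \<Rightarrow> 'b \<Rightarrow> 'b \<Rightarrow> 'b \<Rightarrow> bool" where
  "avoiding r z = (\<lambda>u w. r u w \<and> u \<noteq> z \<and> w \<noteq> z)"

lemma avoiding_iff [simp]: "avoiding r z u w \<longleftrightarrow> r u w \<and> u \<noteq> z \<and> w \<noteq> z"
  by (simp add: avoiding_def)

lemma symp_avoiding: "symp r \<Longrightarrow> symp (avoiding r z)"
  by (auto intro!: sympI dest: sympD)

lemma rtranclp_avoiding_farther:
  assumes "r\<^sup>*\<^sup>* a x" "rel_dist r a x < rel_dist r a z"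
  shows "(avoiding r z)\<^sup>*\<^sup>* a x"
  using assms
proof (induction "rel_dist r a x" arbitrary: x)
  case 0
  then have "x = a" using rel_dist_eq_0_iff by metis
  then show ?case by simp
next
  case (Suc m)
  obtain y where y: "r\<^sup>*\<^sup>* a y" "r y x" "rel_dist r a y = m"
    using rel_dist_SucE[OF Suc.prems(1) Suc.hyps(2)[symmetric]] .
  have "(avoiding r z)\<^sup>*\<^sup>* a y"
    using Suc.hyps(1)[OF y(3)[symmetric] y(1)] y(3) Suc.hyps(2) Suc.prems(2) by simp
  moreover have "avoiding r z y x" using y Suc.hyps(2) Suc.prems(2) by auto
  ultimately show ?case by (rule rtranclp.rtrancl_into_rtrancl)
qed

locale undirected_graph =
  fixes E :: "'a \<Rightarrow> 'a \<Rightarrow> bool"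
  assumes edge_sym: "E x y \<Longrightarrow> E y x"
begin

lemma reach_sym: "reach E T x y \<Longrightarrow> reach E T y x"
proof -
  have "symp (induced_adj E T)"
    by (auto intro!: sympI simp: edge_sym induced_adj_iff)
  then show "reach E T x y \<Longrightarrow> reach E T y x"
    by (rule sympD[OF symp_rtranclp])
qed

lemma conn_if_reach_from:
  assumes "c \<in> T" "\<And>x. x \<in> T \<Longrightarrow> reach E T c x"
  shows "conn E T"
  using assms reach_sym unfolding conn_iff_reach by (meson empty_iff rtranclp_trans)

lemma conn_Un:
  assumes "conn E A" "conn E B" "A \<inter> B \<noteq> {}"
  shows "conn E (A \<union> B)"
proof -
  obtain c where c: "c \<in> A" "c \<in> B" using assms(3) by auto
  have "reach E (A \<union> B) c x" if "x \<in> A \<union> B" for x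
    using that assms(1,2) c reach_mono[of A "A \<union> B"] reach_mono[of B "A \<union> B"]
    unfolding conn_iff_reach by blast
  then show ?thesis using c by (intro conn_if_reach_from) auto
qed

lemma conn_edge: "E a b \<Longrightarrow> conn E {a, b}"
  by (intro conn_if_reach_from[of a]) (auto simp: induced_adj_iff)

lemma biconn_edge: "E a b \<Longrightarrow> biconn E {a, b}"
  using conn_edge unfolding biconn_def by (auto simp: insert_Diff_if conn_iff_reach)

lemma conn_walk: "successively (induced_adj E T) L \<Longrightarrow> L \<noteq> [] \<Longrightarrow> conn E (set L)"
proof (induction L)
  case (Cons x xs)
  show ?case
  proof (cases xs)
    case Nil
    then show ?thesis by (simp add: conn_iff_reach)
  next
    case (Cons y ys)
    with Cons.prems have "E x y" "successively (induced_adj E T) xs"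
      by (auto simp: successively_Cons induced_adj_iff)
    with Cons.IH \<open>xs = y # ys\<close> have "conn E ({x, y} \<union> set xs)"
      by (intro conn_Un conn_edge) auto
    then show ?thesis using \<open>xs = y # ys\<close> by (simp add: insert_absorb)
  qed
qed simp

lemma conn_Un_walk:
  assumes "conn E A" "successively (induced_adj E T) L" "L \<noteq> [] \<Longrightarrow> set L \<inter> A \<noteq> {}"
  shows "conn E (A \<union> set L)"
  using assms conn_Un[OF assms(1) conn_walk] by (cases "L = []") auto

lemma conn_Un_walk_Diff:
  assumes A: "conn E A" "w \<notin> A"
    and L: "successively (induced_adj E T) L" "distinct L" "hd L \<in> insert w A" "last L \<in> insert w A"
  shows "conn E (A \<union> (set L - {w}))"
proof -
  obtain pre post where split: "set L - {w} = set pre \<union> set post"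
    "successively (induced_adj E T) pre" "successively (induced_adj E T) post"
    "pre \<noteq> [] \<Longrightarrow> hd pre = hd L" "post \<noteq> [] \<Longrightarrow> last post = last L"
    using successively_split_at[OF L(1,2)] by blast
  have "conn E (A \<union> set pre)"
  proof (rule conn_Un_walk[OF A(1) split(2)])
    assume "pre \<noteq> []"
    then have "hd L \<in> set pre" using split(4) hd_in_set by metis
    then show "set pre \<inter> A \<noteq> {}" using L(3) split(1) by blast
  qed
  moreover have "conn E (A \<union> set post)"
  proof (rule conn_Un_walk[OF A(1) split(3)])
    assume "post \<noteq> []"
    then have "last L \<in> set post" using split(5) last_in_set by metis
    then show "set post \<inter> A \<noteq> {}" using L(4) split(1) by blast
  qed
  ultimately have "conn E ((A \<union> set pre) \<union> (A \<union> set post))"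
    by (rule conn_Un) (use A(1) in \<open>auto simp: conn_def\<close>)
  moreover have "(A \<union> set pre) \<union> (A \<union> set post) = A \<union> (set L - {w})"
    using split(1) by blast
  ultimately show ?thesis by simp
qed

lemma biconn_Un_walk:
  assumes B: "biconn E B" "v \<in> B" "hd L \<in> B" "hd L \<noteq> v"
    and B': "biconn E B'" "v \<in> B'" "last L \<in> B'" "last L \<noteq> v"
    and L: "successively (induced_adj E T) L" "distinct L" "L \<noteq> []" "v \<notin> set L"
  shows "biconn E (B \<union> B' \<union> set L)"
  unfolding biconn_def
proof (intro conjI ballI impI)
  have "conn E B" "conn E B'" using B B' by (auto simp: biconn_def)
  with B B' have "conn E (B \<union> B')" by (intro conn_Un) auto
  moreover have "set L \<inter> (B \<union> B') \<noteq> {}" using B(3) hd_in_set[OF L(3)] by blast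
  ultimately show "conn E (B \<union> B' \<union> set L)" using L(1) by (intro conn_Un_walk)
  fix w
  show "conn E (B \<union> B' \<union> set L - {w})"
  proof (cases "w = v")
    case True
    have "conn E ((B - {v}) \<union> set L)"
      by (rule conn_Un_walk[OF conn_Diff_if_biconn[OF B(1)] L(1)])
        (use B hd_in_set[OF L(3)] in blast)+
    then have "conn E ((B - {v}) \<union> set L \<union> (B' - {v}))"
      by (rule conn_Un[OF _ conn_Diff_if_biconn[OF B'(1)]])
        (use B' last_in_set[OF L(3)] in blast)+
    moreover have "(B - {v}) \<union> set L \<union> (B' - {v}) = B \<union> B' \<union> set L - {w}"
      using True L(4) by auto
    ultimately show ?thesis by simp
  next
    case False
    have "conn E ((B - {w}) \<union> (B' - {w}))"
      by (rule conn_Un[OF conn_Diff_if_biconn[OF B(1)] conn_Diff_if_biconn[OF B'(1)]])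
        (use B(2) B'(2) False in blast)+
    then have "conn E ((B - {w}) \<union> (B' - {w}) \<union> (set L - {w}))"
      using B(3) B'(3) L(1,2) by (intro conn_Un_walk_Diff) auto
    moreover have "(B - {w}) \<union> (B' - {w}) \<union> (set L - {w}) = B \<union> B' \<union> set L - {w}" by blast
    ultimately show ?thesis by simp
  qed
qed

lemma reach_class_in_comps:
  assumes "x \<in> T"
  shows "{y. reach E T x y} \<in> comps E T"
  unfolding comps_def
proof (intro CollectI conjI allI impI)
  let ?K = "{y. reach E T x y}"
  show "?K \<subseteq> T" using reach_closed[OF _ assms] by blast
  have "reach E ?K x y" if "reach E T x y" for y
    using that
  proof (induction rule: rtranclp_induct)
    case (step y z)
    then have "induced_adj E ?K y z"
      by (auto simp: induced_adj_iff intro: rtranclp.rtrancl_into_rtrancl)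
    with step.IH show ?case by (rule rtranclp.rtrancl_into_rtrancl)
  qed simp
  then show "conn E ?K" by (intro conn_if_reach_from[of x]) auto
  fix D assume D: "?K \<subseteq> D \<and> D \<subseteq> T \<and> conn E D"
  then have "reach E D x d" if "d \<in> D" for d
    using that unfolding conn_iff_reach by auto
  then have "D \<subseteq> ?K" using D reach_mono[of D T] by blast
  with D show "D = ?K" by blast
qed

lemma component_eq_reach_class:
  assumes C: "C \<in> comps E T" and x: "x \<in> C"
  shows "C = {y. reach E T x y}"
proof -
  have CT: "C \<subseteq> T" "conn E C" using C by (auto simp: comps_def)
  then have sub: "C \<subseteq> {y. reach E T x y}"
    using x reach_mono[of C T] unfolding conn_iff_reach by blast
  have "{y. reach E T x y} \<in> comps E T" using x CT by (intro reach_class_in_comps) auto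
  then have "{y. reach E T x y} \<subseteq> T \<and> conn E {y. reach E T x y}" by (simp add: comps_def)
  moreover have "\<forall>D. C \<subseteq> D \<and> D \<subseteq> T \<and> conn E D \<longrightarrow> D = C" using C by (simp add: comps_def)
  ultimately show ?thesis using sub by blast
qed

lemma comps_disjoint:
  "C1 \<in> comps E T \<Longrightarrow> C2 \<in> comps E T \<Longrightarrow> z \<in> C1 \<Longrightarrow> z \<in> C2 \<Longrightarrow> C1 = C2"
  using component_eq_reach_class[of C1 T z] component_eq_reach_class[of C2 T z] by simp

lemma cut_vertex_if_separates:
  assumes "finite S" "x \<in> S - {v}" "y \<in> S - {v}"
    and "reach E S v x" "reach E S v y" "\<not> reach E (S - {v}) x y"
  shows "cut_vertex E S v"
proof -
  let ?T = "S - {v}"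
  define pick where "pick C = (if v \<in> C then x else (SOME c. c \<in> C))" for C
  define f where "f C = {z. reach E ?T (pick C) z}" for C
  have pick: "pick C \<in> C - {v}" if C: "C \<in> comps E S" for C
  proof (cases "v \<in> C")
    case True
    then have "C = {z. reach E S v z}" using component_eq_reach_class[OF C] by blast
    with True assms(2,4) show ?thesis by (simp add: pick_def)
  next
    case False
    have "C \<noteq> {}" using C by (simp add: comps_def conn_def)
    with False show ?thesis unfolding pick_def by (simp add: some_in_eq)
  qed
  have f_comp: "f C \<in> comps E ?T" if C: "C \<in> comps E S" for C
    using pick[OF C] C unfolding f_def by (intro reach_class_in_comps) (auto simp: comps_def)
  have f_sub: "pick C \<in> f C \<and> f C \<subseteq> C" if C: "C \<in> comps E S" for C
  proof -
    have "C = {z. reach E S (pick C) z}" using component_eq_reach_class[OF C] pick[OF C] by blast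
    then show ?thesis using reach_mono[of ?T S] unfolding f_def by auto
  qed
  have "inj_on f (comps E S)"
  proof (rule inj_onI)
    fix C1 C2 assume C: "C1 \<in> comps E S" "C2 \<in> comps E S" "f C1 = f C2"
    then have "pick C1 \<in> C1" "pick C1 \<in> C2" using f_sub[OF C(1)] f_sub[OF C(2)] by auto
    with C show "C1 = C2" by (intro comps_disjoint)
  qed
  then have "card (comps E S) = card (f ` comps E S)" by (simp add: card_image)
  also have "\<dots> < card (comps E ?T)"
  proof (rule psubset_card_mono)
    have "comps E ?T \<subseteq> Pow S" by (auto simp: comps_def)
    then show "finite (comps E ?T)" using assms(1) finite_subset by blast
    have "{z. reach E ?T y z} \<notin> f ` comps E S"
    proof
      assume "{z. reach E ?T y z} \<in> f ` comps E S"
      then obtain C where C: "C \<in> comps E S" "f C = {z. reach E ?T y z}" by auto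
      then have "y \<in> C" using f_sub by auto
      then have "C = {z. reach E S y z}" using component_eq_reach_class[OF C(1)] by blast
      then have "v \<in> C" using reach_sym[OF assms(5)] by blast
      then have "y \<in> {z. reach E ?T x z}" using C f_sub[OF C(1)] by (simp add: f_def pick_def)
      with assms(6) show False by simp
    qed
    moreover have "{z. reach E ?T y z} \<in> comps E ?T" using assms(3) by (rule reach_class_in_comps)
    ultimately show "f ` comps E S \<subset> comps E ?T" using f_comp by blast
  qed
  finally have "card (comps E S) < card (comps E ?T)" .
  moreover have "v \<in> S" using reach_closed[OF reach_sym[OF assms(4)]] assms(2) by blast
  ultimately show ?thesis unfolding cut_vertex_def by blast
qed

lemma segment_conn_subset:
  assumes "is_segment E Vs l Z I" "(\<Union>i\<in>{1..l}. Vs i) = V"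
  shows "conn E I" "I \<subseteq> V - Z"
  using assms unfolding is_segment_def comps_def by auto

lemma segments_disjoint:
  assumes "\<And>i j. i \<in> {1..l} \<Longrightarrow> j \<in> {1..l} \<Longrightarrow> i \<noteq> j \<Longrightarrow> Vs i \<inter> Vs j = {}"
    and "is_segment E Vs l Z I1" "is_segment E Vs l Z I2" "I1 \<noteq> I2"
  shows "I1 \<inter> I2 = {}"
proof -
  obtain i j where i: "i \<in> {1..l}" "I1 \<in> comps E (Vs i - Z)"
    and j: "j \<in> {1..l}" "I2 \<in> comps E (Vs j - Z)"
    using assms(2,3) unfolding is_segment_def by blast
  show ?thesis
  proof (cases "i = j")
    case True
    show ?thesis
    proof (rule ccontr)
      assume "I1 \<inter> I2 \<noteq> {}"
      then obtain z where "z \<in> I1" "z \<in> I2" by blast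
      moreover have "I2 \<in> comps E (Vs i - Z)" using j(2) True by simp
      ultimately have "I1 = I2" using comps_disjoint[OF i(2)] by blast
      with assms(4) show False ..
    qed
  next
    case False
    then have "Vs i \<inter> Vs j = {}" using assms(1) i(1) j(1) by blast
    moreover have "I1 \<subseteq> Vs i" "I2 \<subseteq> Vs j" using i(2) j(2) by (auto simp: comps_def)
    ultimately show ?thesis by blast
  qed
qed

end

locale block_graph = undirected_graph E for E :: "'a \<Rightarrow> 'a \<Rightarrow> bool" +
  fixes S :: "'a set"
  assumes finite_S: "finite S"
begin

lemma block_subset: "B \<in> blocks E S \<Longrightarrow> B \<subseteq> S"
  and block_biconn: "B \<in> blocks E S \<Longrightarrow> biconn E B"
  and block_maximal: "B \<in> blocks E S \<Longrightarrow> B \<subseteq> D \<Longrightarrow> D \<subseteq> S \<Longrightarrow> biconn E D \<Longrightarrow> D = B"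
  by (simp_all add: blocks_def)

lemma biconn_subset_block:
  assumes "T \<subseteq> S" "biconn E T"
  obtains B where "B \<in> blocks E S" "T \<subseteq> B"
proof -
  have "{D. D \<subseteq> S \<and> biconn E D} \<subseteq> Pow S" by blast
  then have "finite {D. D \<subseteq> S \<and> biconn E D}" using finite_S finite_subset by blast
  then obtain B where "B \<in> {D. D \<subseteq> S \<and> biconn E D}" "T \<subseteq> B"
      "\<forall>D\<in>{D. D \<subseteq> S \<and> biconn E D}. B \<subseteq> D \<longrightarrow> B = D"
    using finite_has_maximal2[of _ T] assms by (metis (no_types, lifting) mem_Collect_eq)
  then show thesis by (intro that[of B]) (auto simp: blocks_def)
qed

lemma edge_in_block:
  assumes "E a b" "a \<in> S" "b \<in> S"
  obtains B where "B \<in> blocks E S" "a \<in> B" "b \<in> B"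
  by (rule biconn_subset_block[of "{a, b}"]) (use assms that biconn_edge in auto)

lemma block_has_other_vertex:
  assumes "B \<in> blocks E S" "B' \<in> blocks E S" "B \<noteq> B'" "v \<in> B'"
  obtains x where "x \<in> B" "x \<noteq> v"
proof -
  have "\<not> B \<subseteq> B'"
    using block_maximal[OF assms(1) _ block_subset[OF assms(2)] block_biconn[OF assms(2)]] assms(3)
    by blast
  with assms(4) that show thesis by blast
qed

(* Otherwise B, B' and a walk between them would form a larger 2-connected set. *)
lemma not_reach_across_shared_vertex:
  assumes B: "B \<in> blocks E S" "v \<in> B" "x \<in> B" "x \<noteq> v"
    and B': "B' \<in> blocks E S" "v \<in> B'" "y \<in> B'" "y \<noteq> v"
    and "B \<noteq> B'"
  shows "\<not> reach E (S - {v}) x y"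
proof
  assume "reach E (S - {v}) x y"
  then obtain L where L: "successively (induced_adj E (S - {v})) L" "distinct L" "L \<noteq> []"
    "hd L = x" "last L = y"
    by (rule obtain_distinct_walk)
  have "x \<in> S - {v}" using B block_subset[OF B(1)] by blast
  then have LS: "set L \<subseteq> S - {v}" using set_walk_subset[OF L(1)] L(4) by blast
  define H where "H = B \<union> B' \<union> set L"
  have "biconn E H"
    unfolding H_def using B B' L block_biconn[OF B(1)] block_biconn[OF B'(1)] LS
    by (intro biconn_Un_walk[where T = "S - {v}"]) auto
  moreover have "H \<subseteq> S" using LS block_subset[OF B(1)] block_subset[OF B'(1)] by (auto simp: H_def)
  ultimately have "H = B" "H = B'"
    using block_maximal[OF B(1), of H] block_maximal[OF B'(1), of H] by (auto simp: H_def)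
  with \<open>B \<noteq> B'\<close> show False by simp
qed

lemma cut_vertex_if_shared:
  assumes "B \<in> blocks E S" "B' \<in> blocks E S" "B \<noteq> B'" "v \<in> B" "v \<in> B'"
  shows "cut_vertex E S v"
proof -
  obtain x where x: "x \<in> B" "x \<noteq> v"
    using block_has_other_vertex[OF assms(1,2,3,5)] .
  obtain y where y: "y \<in> B'" "y \<noteq> v"
    using block_has_other_vertex[OF assms(2,1) assms(3)[symmetric] assms(4)] .
  have "conn E B" "conn E B'" using assms(1,2) block_biconn by (auto simp: biconn_def)
  then have "reach E B v x" "reach E B' v y" using assms(4,5) x y by (auto simp: conn_iff_reach)
  then have "reach E S v x" "reach E S v y"
    using reach_mono[OF block_subset[OF assms(1)]] reach_mono[OF block_subset[OF assms(2)]] by auto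
  moreover have "x \<in> S - {v}" "y \<in> S - {v}"
    using x y block_subset[OF assms(1)] block_subset[OF assms(2)] by auto
  moreover have "\<not> reach E (S - {v}) x y"
    using not_reach_across_shared_vertex[OF assms(1,4) x assms(2,5) y assms(3)] .
  ultimately show ?thesis using finite_S by (intro cut_vertex_if_separates)
qed

end

lemma bc_adj_simps [simp]:
  "bc_adj E S (Inl B) (Inr v) \<longleftrightarrow> B \<in> blocks E S \<and> cut_vertex E S v \<and> v \<in> B"
  "bc_adj E S (Inr v) (Inl B) \<longleftrightarrow> B \<in> blocks E S \<and> cut_vertex E S v \<and> v \<in> B"
  "\<not> bc_adj E S (Inl B) (Inl B')"
  "\<not> bc_adj E S (Inr u) (Inr v)"
  unfolding bc_adj_def by blast+

lemma symp_bc_adj: "symp (bc_adj E S)"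
  unfolding bc_adj_def by (rule sympI) blast

lemma bc_adj_relpowp_parity: "(bc_adj E S ^^ n) a b \<Longrightarrow> isl a = isl b \<longleftrightarrow> even n"
proof (induction n arbitrary: b)
  case (Suc n)
  obtain y where y: "(bc_adj E S ^^ n) a y" "bc_adj E S y b"
    using Suc.prems by (rule relpowp_Suc_E)
  have "isl y \<noteq> isl b" using y(2) by (cases y; cases b) auto
  with Suc.IH[OF y(1)] show ?case by auto
qed simp

lemma bc_dist_eq_rel_dist: "bc_dist E S = rel_dist (bc_adj E S)"
  by (simp add: fun_eq_iff bc_dist_def rel_dist_def)

fun bc_node_vertices :: "'a set + 'a \<Rightarrow> 'a set" where
  "bc_node_vertices (Inl B) = B"
| "bc_node_vertices (Inr v) = {v}"

locale rooted_block_graph = block_graph E S for E :: "'a \<Rightarrow> 'a \<Rightarrow> bool" and S +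
  fixes Rts :: "'a set set"
  assumes roots: "roots_ok E S Rts"
begin

abbreviation adj :: "'a set + 'a \<Rightarrow> 'a set + 'a \<Rightarrow> bool" where
  "adj \<equiv> bc_adj E S"

abbreviation level :: "'a set \<Rightarrow> 'a set + 'a \<Rightarrow> nat" where
  "level R \<equiv> rel_dist adj (Inl R)"

lemma adj_sym: "adj x y \<Longrightarrow> adj y x"
  by (rule sympD[OF symp_bc_adj])

lemma adj_rtranclp_sym: "adj\<^sup>*\<^sup>* x y \<Longrightarrow> adj\<^sup>*\<^sup>* y x"
  by (rule sympD[OF symp_rtranclp[OF symp_bc_adj]])

lemma root_exists:
  assumes "C \<in> blocks E S"
  obtains R where "R \<in> Rts" "adj\<^sup>*\<^sup>* (Inl C) (Inl R)"
  using roots assms unfolding roots_ok_def by blast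

lemma root_unique:
  "C \<in> blocks E S \<Longrightarrow> R1 \<in> Rts \<Longrightarrow> R2 \<in> Rts \<Longrightarrow> adj\<^sup>*\<^sup>* (Inl C) (Inl R1) \<Longrightarrow>
    adj\<^sup>*\<^sup>* (Inl C) (Inl R2) \<Longrightarrow> R1 = R2"
  using roots unfolding roots_ok_def by blast

lemma level_even_iff_block: "adj\<^sup>*\<^sup>* (Inl R) x \<Longrightarrow> even (level R x) \<longleftrightarrow> isl x"
  using bc_adj_relpowp_parity[OF relpowp_rel_dist] by fastforce

lemma reach_in_block_Diff:
  assumes "Q \<in> blocks E S" "w \<in> Q - {u}" "z \<in> Q - {u}"
  shows "reach E (S - {u}) w z"
proof -
  have "conn E (Q - {u})" using conn_Diff_if_biconn[OF block_biconn[OF assms(1)]] assms(2) by blast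
  then have "reach E (Q - {u}) w z" using assms(2,3) unfolding conn_iff_reach by blast
  then show ?thesis by (rule reach_mono[rotated]) (use block_subset[OF assms(1)] in blast)
qed

lemma reach_if_bc_walk_avoiding:
  assumes Q: "Q \<in> blocks E S" "a \<in> Q" "a \<noteq> u"
    and walk: "(avoiding adj (Inr u))\<^sup>*\<^sup>* (Inl Q) n"
    and z: "z \<in> bc_node_vertices n" "z \<noteq> u"
  shows "reach E (S - {u}) a z"
  using walk z
proof (induction arbitrary: z rule: rtranclp_induct)
  case base
  then show ?case using Q by (intro reach_in_block_Diff[OF Q(1)]) auto
next
  case (step n n')
  then have n: "adj n n'" "n \<noteq> Inr u" "n' \<noteq> Inr u" by simp_all
  show ?case
  proof (cases n')
    case (Inr w)
    then obtain Q' where "n = Inl Q'" "w \<in> Q'" using n by (cases n) auto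
    moreover have "z = w" "w \<noteq> u" using step.prems n(3) Inr by auto
    ultimately show ?thesis using step.IH[of w] by simp
  next
    case (Inl Q')
    then obtain w where w: "n = Inr w" "w \<in> Q'" "Q' \<in> blocks E S" "w \<noteq> u"
      using n by (cases n) auto
    then have "reach E (S - {u}) a w" using step.IH by simp
    moreover have "reach E (S - {u}) w z"
      using w step.prems Inl by (intro reach_in_block_Diff[of Q']) auto
    ultimately show ?thesis by (rule rtranclp_trans)
  qed
qed

lemma no_bc_walk_avoiding_shared_vertex:
  assumes "Q1 \<in> blocks E S" "Q2 \<in> blocks E S" "Q1 \<noteq> Q2" "u \<in> Q1" "u \<in> Q2"
  shows "\<not> (avoiding adj (Inr u))\<^sup>*\<^sup>* (Inl Q1) (Inl Q2)"
proof
  assume walk: "(avoiding adj (Inr u))\<^sup>*\<^sup>* (Inl Q1) (Inl Q2)"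
  obtain a where a: "a \<in> Q1" "a \<noteq> u" using block_has_other_vertex[OF assms(1-3,5)] .
  obtain b where b: "b \<in> Q2" "b \<noteq> u"
    using block_has_other_vertex[OF assms(2,1) assms(3)[symmetric] assms(4)] .
  have "reach E (S - {u}) a b" using reach_if_bc_walk_avoiding[OF assms(1) a walk] b by simp
  with not_reach_across_shared_vertex[OF assms(1,4) a assms(2,5) b assms(3)] show False ..
qed

lemma avoiding_rtranclp_sym: "(avoiding adj z)\<^sup>*\<^sup>* x y \<Longrightarrow> (avoiding adj z)\<^sup>*\<^sup>* y x"
  by (rule sympD[OF symp_rtranclp[OF symp_avoiding[OF symp_bc_adj]]])

lemma bc_parent_unique_at_cut:
  assumes r: "adj\<^sup>*\<^sup>* (Inl R) (Inl Q1)" "adj\<^sup>*\<^sup>* (Inl R) (Inl Q2)"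
    and y: "adj (Inl Q1) (Inr w)" "adj (Inl Q2) (Inr w)"
    and lev: "Suc (level R (Inl Q1)) = level R (Inr w)" "Suc (level R (Inl Q2)) = level R (Inr w)"
  shows "Q1 = Q2"
proof (rule ccontr)
  assume "Q1 \<noteq> Q2"
  have "(avoiding adj (Inr w))\<^sup>*\<^sup>* (Inl R) (Inl Q1)" "(avoiding adj (Inr w))\<^sup>*\<^sup>* (Inl R) (Inl Q2)"
    using rtranclp_avoiding_farther[OF r(1)] rtranclp_avoiding_farther[OF r(2)] lev by simp_all
  then have "(avoiding adj (Inr w))\<^sup>*\<^sup>* (Inl Q1) (Inl Q2)"
    by (meson avoiding_rtranclp_sym rtranclp_trans)
  with no_bc_walk_avoiding_shared_vertex \<open>Q1 \<noteq> Q2\<close> y show False by simp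
qed

lemma bc_parent_unique_at_block:
  assumes r: "adj\<^sup>*\<^sup>* (Inl R) (Inr u1)" "adj\<^sup>*\<^sup>* (Inl R) (Inr u2)"
    and y: "adj (Inr u1) (Inl B)" "adj (Inr u2) (Inl B)"
    and lev: "Suc (level R (Inr u1)) = level R (Inl B)" "Suc (level R (Inr u2)) = level R (Inl B)"
  shows "u1 = u2"
proof (rule ccontr)
  assume "u1 \<noteq> u2"
  have "level R (Inr u1) \<noteq> 0" using rel_dist_eq_0_iff[OF r(1)] by simp
  then obtain m where m: "level R (Inr u1) = Suc m" "level R (Inr u2) = Suc m"
    using lev not0_implies_Suc by force
  obtain p1 where p1: "adj\<^sup>*\<^sup>* (Inl R) p1" "adj p1 (Inr u1)" "level R p1 = m"
    using rel_dist_SucE[OF r(1) m(1)] .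
  obtain p2 where p2: "adj\<^sup>*\<^sup>* (Inl R) p2" "adj p2 (Inr u2)" "level R p2 = m"
    using rel_dist_SucE[OF r(2) m(2)] .
  obtain Q1 Q2 where Q: "p1 = Inl Q1" "p2 = Inl Q2"
    using p1(2) p2(2) by (cases p1; cases p2) auto
  have "Q1 \<noteq> B" using p1(3) lev(1) m(1) Q by auto
  have "(avoiding adj (Inr u1))\<^sup>*\<^sup>* (Inl R) (Inl Q1)" "(avoiding adj (Inr u1))\<^sup>*\<^sup>* (Inl R) (Inl Q2)"
    using rtranclp_avoiding_farther[OF p1(1)] rtranclp_avoiding_farther[OF p2(1)] p1(3) p2(3) m Q
    by simp_all
  then have "(avoiding adj (Inr u1))\<^sup>*\<^sup>* (Inl Q1) (Inl Q2)"
    by (meson avoiding_rtranclp_sym rtranclp_trans)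
  moreover have "avoiding adj (Inr u1) (Inl Q2) (Inr u2)" "avoiding adj (Inr u1) (Inr u2) (Inl B)"
    using p2(2) y(2) Q \<open>u1 \<noteq> u2\<close> by auto
  ultimately have "(avoiding adj (Inr u1))\<^sup>*\<^sup>* (Inl Q1) (Inl B)"
    by (meson rtranclp.rtrancl_into_rtrancl)
  with no_bc_walk_avoiding_shared_vertex \<open>Q1 \<noteq> B\<close> p1(2) y(1) Q show False by simp
qed

lemma bc_parent_unique:
  assumes x: "adj\<^sup>*\<^sup>* (Inl R) x" and y: "adj y1 x" "adj y2 x"
    and lev: "Suc (level R y1) = level R x" "Suc (level R y2) = level R x"
  shows "y1 = y2"
proof -
  have r: "adj\<^sup>*\<^sup>* (Inl R) y1" "adj\<^sup>*\<^sup>* (Inl R) y2"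
    using x y adj_sym by (meson rtranclp.rtrancl_into_rtrancl)+
  show ?thesis
  proof (cases x)
    case (Inl B)
    then obtain u1 u2 where "y1 = Inr u1" "y2 = Inr u2" using y by (cases y1; cases y2) auto
    with bc_parent_unique_at_block r y lev Inl show ?thesis by blast
  next
    case (Inr w)
    then obtain Q1 Q2 where "y1 = Inl Q1" "y2 = Inl Q2" using y by (cases y1; cases y2) auto
    with bc_parent_unique_at_cut r y lev Inr show ?thesis by blast
  qed
qed

lemma level_adj_cases:
  assumes "adj\<^sup>*\<^sup>* (Inl R) x" "adj x y"
  shows "level R y = Suc (level R x) \<or> Suc (level R y) = level R x"
proof -
  have y: "adj\<^sup>*\<^sup>* (Inl R) y" using assms by (rule rtranclp.rtrancl_into_rtrancl)
  have "isl x \<noteq> isl y" using assms(2) by (cases x; cases y) auto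
  then have "level R x \<noteq> level R y"
    using level_even_iff_block[OF assms(1)] level_even_iff_block[OF y] by auto
  moreover have "level R y \<le> Suc (level R x)" "level R x \<le> Suc (level R y)"
    using rel_dist_step[OF assms] rel_dist_step[OF y adj_sym[OF assms(2)]] by auto
  ultimately show ?thesis by linarith
qed

lemma tparent_iff_level:
  "tparent E S Rts C P \<longleftrightarrow> C \<in> blocks E S \<and> P \<in> blocks E S \<and> C \<notin> Rts \<and>
     (\<exists>R\<in>Rts. adj\<^sup>*\<^sup>* (Inl C) (Inl R) \<and>
       (\<exists>v. adj (Inl C) (Inr v) \<and> adj (Inr v) (Inl P) \<and>
            Suc (level R (Inr v)) = level R (Inl C) \<and> Suc (level R (Inl P)) = level R (Inr v)))"
  unfolding tparent_def bc_dist_eq_rel_dist by simp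

lemma level_if_tparent_relpowp:
  assumes "(tparent E S Rts ^^ n) C R'" "R' \<in> Rts"
    and "C \<in> blocks E S" "R \<in> Rts" "adj\<^sup>*\<^sup>* (Inl C) (Inl R)"
  shows "level R (Inl C) = 2 * n"
  using assms
proof (induction n arbitrary: C)
  case 0
  then have "C = R" using root_unique[of C C R] by simp
  then show ?case by simp
next
  case (Suc n)
  obtain P where P: "tparent E S Rts C P" "(tparent E S Rts ^^ n) P R'"
    using relpowp_Suc_D2[OF Suc.prems(1)] by blast
  then obtain R0 v where R0: "R0 \<in> Rts" "adj\<^sup>*\<^sup>* (Inl C) (Inl R0)" "P \<in> blocks E S"
      "adj (Inl C) (Inr v)" "adj (Inr v) (Inl P)"
      "Suc (level R0 (Inr v)) = level R0 (Inl C)" "Suc (level R0 (Inl P)) = level R0 (Inr v)"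
    unfolding tparent_iff_level by blast
  have "R0 = R" using root_unique R0(1,2) Suc.prems(3-5) by blast
  have "adj\<^sup>*\<^sup>* (Inl P) (Inl C)"
    using R0(4,5) adj_sym by (meson converse_rtranclp_into_rtranclp r_into_rtranclp)
  then have "adj\<^sup>*\<^sup>* (Inl P) (Inl R)" using Suc.prems(5) by (rule rtranclp_trans)
  then have "level R (Inl P) = 2 * n" using Suc.IH[OF P(2) Suc.prems(2) R0(3) Suc.prems(4)] by blast
  with R0(6,7) \<open>R0 = R\<close> show ?case by simp
qed

lemma tparent_relpowp_if_level:
  assumes "C \<in> blocks E S" "R \<in> Rts" "adj\<^sup>*\<^sup>* (Inl C) (Inl R)" "level R (Inl C) = 2 * n"
  shows "(tparent E S Rts ^^ n) C R"
  using assms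
proof (induction n arbitrary: C)
  case 0
  then have "Inl C = Inl R" using rel_dist_eq_0_iff[OF adj_rtranclp_sym[OF 0(3)]] by simp
  then show ?case by simp
next
  case (Suc n)
  have RC: "adj\<^sup>*\<^sup>* (Inl R) (Inl C)" using adj_rtranclp_sym[OF Suc.prems(3)] .
  obtain y where y: "adj\<^sup>*\<^sup>* (Inl R) y" "adj y (Inl C)" "level R y = Suc (2 * n)"
    using rel_dist_SucE[OF RC] Suc.prems(4) by (metis mult_Suc_right add_2_eq_Suc)
  obtain p where p: "adj\<^sup>*\<^sup>* (Inl R) p" "adj p y" "level R p = 2 * n"
    using rel_dist_SucE[OF y(1) y(3)] .
  obtain v P where vP: "y = Inr v" "p = Inl P" using y(2) p(2) by (cases y; cases p) auto
  have "P \<in> blocks E S" using p(2) vP by simp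
  have "C \<notin> Rts"
  proof
    assume "C \<in> Rts"
    then have "C = R" using root_unique[of C C R] Suc.prems by simp
    with Suc.prems(4) show False by simp
  qed
  have "tparent E S Rts C P"
    unfolding tparent_iff_level
    using Suc.prems \<open>P \<in> blocks E S\<close> \<open>C \<notin> Rts\<close> y p vP adj_sym
    by (auto intro!: bexI[of _ R] exI[of _ v])
  moreover have "(tparent E S Rts ^^ n) P R"
    using Suc.IH[OF \<open>P \<in> blocks E S\<close> Suc.prems(2) adj_rtranclp_sym] p vP by simp
  ultimately show ?case by (rule relpowp_Suc_I2)
qed

lemma tdepth_eq_level:
  assumes "C \<in> blocks E S" "R \<in> Rts" "adj\<^sup>*\<^sup>* (Inl C) (Inl R)"
  shows "tdepth E S Rts C = level R (Inl C) div 2"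
  unfolding tdepth_def
proof (rule Least_equality)
  have "even (level R (Inl C))" using level_even_iff_block[OF adj_rtranclp_sym[OF assms(3)]] by simp
  then have "(tparent E S Rts ^^ (level R (Inl C) div 2)) C R"
    using assms by (intro tparent_relpowp_if_level) auto
  with assms(2) show "\<exists>R'\<in>Rts. (tparent E S Rts ^^ (level R (Inl C) div 2)) C R'" ..
  fix n assume "\<exists>R'\<in>Rts. (tparent E S Rts ^^ n) C R'"
  then show "level R (Inl C) div 2 \<le> n" using level_if_tparent_relpowp assms by fastforce
qed

(* The cut vertex joining t to its parent node; empty if t is the root R. *)
definition parent_cuts :: "'a set \<Rightarrow> 'a set \<Rightarrow> 'a set" where
  "parent_cuts R t = {v. adj (Inl t) (Inr v) \<and> Suc (level R (Inr v)) = level R (Inl t)}"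

lemma parent_cuts_unique:
  "adj\<^sup>*\<^sup>* (Inl R) (Inl t) \<Longrightarrow> u \<in> parent_cuts R t \<Longrightarrow> v \<in> parent_cuts R t \<Longrightarrow> u = v"
  unfolding parent_cuts_def using bc_parent_unique adj_sym by blast

(* x lies below t: some shortest walk from the root R to x passes through t. *)
definition in_subtree :: "'a set \<Rightarrow> 'a set \<Rightarrow> 'a set + 'a \<Rightarrow> bool" where
  "in_subtree R t x \<longleftrightarrow> adj\<^sup>*\<^sup>* (Inl R) x \<and> level R x = level R (Inl t) + rel_dist adj (Inl t) x"

lemma in_subtree_self: "adj\<^sup>*\<^sup>* (Inl R) (Inl t) \<Longrightarrow> in_subtree R t (Inl t)"
  by (simp add: in_subtree_def)

lemma in_subtree_adj:
  assumes Rt: "adj\<^sup>*\<^sup>* (Inl R) (Inl t)" and x: "in_subtree R t x" and xy: "adj x y"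
    and not_up: "x = Inl t \<Longrightarrow> Suc (level R y) \<noteq> level R x"
    \<comment> \<open>the only edge leaving the subtree is the one from t to its parent\<close>
  shows "in_subtree R t y"
proof -
  have Rx: "adj\<^sup>*\<^sup>* (Inl R) x" and dx: "level R x = level R (Inl t) + rel_dist adj (Inl t) x"
    using x by (simp_all add: in_subtree_def)
  have Ry: "adj\<^sup>*\<^sup>* (Inl R) y" using Rx xy by (rule rtranclp.rtrancl_into_rtrancl)
  have tx: "adj\<^sup>*\<^sup>* (Inl t) x" using adj_rtranclp_sym[OF Rt] Rx by (rule rtranclp_trans)
  have ty: "adj\<^sup>*\<^sup>* (Inl t) y" using tx xy by (rule rtranclp.rtrancl_into_rtrancl)
  have "level R y = level R (Inl t) + rel_dist adj (Inl t) y"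
  proof (cases "level R y = Suc (level R x)")
    case True
    then show ?thesis
      using rel_dist_step[OF tx xy] rel_dist_triangle[OF Rt ty] dx by linarith
  next
    case False
    then have down: "Suc (level R y) = level R x" using level_adj_cases[OF Rx xy] by simp
    with not_up have "x \<noteq> Inl t" by blast
    then obtain j where j: "rel_dist adj (Inl t) x = Suc j"
      using rel_dist_eq_0_iff[OF tx] not0_implies_Suc by blast
    obtain w where w: "adj\<^sup>*\<^sup>* (Inl t) w" "adj w x" "rel_dist adj (Inl t) w = j"
      using rel_dist_SucE[OF tx j] .
    have Rw: "adj\<^sup>*\<^sup>* (Inl R) w" using Rt w(1) by (rule rtranclp_trans)
    have "level R w \<le> level R (Inl t) + j" using rel_dist_triangle[OF Rt w(1)] w(3) by simp
    moreover have "level R x \<le> Suc (level R w)" using rel_dist_step[OF Rw w(2)] .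
    ultimately have "Suc (level R w) = level R x" using dx j by linarith
    then have "w = y" using bc_parent_unique[OF Rx w(2) adj_sym[OF xy]] down by simp
    with w(3) dx j down show ?thesis by simp
  qed
  with Ry show ?thesis by (simp add: in_subtree_def)
qed

lemma in_subtree_block_step:
  assumes Rt: "adj\<^sup>*\<^sup>* (Inl R) (Inl t)"
    and B1: "B1 \<in> blocks E S" "in_subtree R t (Inl B1)" "z \<in> B1"
    and B2: "B2 \<in> blocks E S" "z \<in> B2"
    and z: "z \<notin> parent_cuts R t"
  shows "in_subtree R t (Inl B2)"
proof (cases "B1 = B2")
  case False
  have "cut_vertex E S z" using cut_vertex_if_shared[OF B1(1) B2(1) False B1(3) B2(2)] .
  then have a: "adj (Inl B1) (Inr z)" "adj (Inr z) (Inl B2)" using B1 B2 by simp_all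
  have "in_subtree R t (Inr z)"
    using in_subtree_adj[OF Rt B1(2) a(1)] z a(1) unfolding parent_cuts_def by blast
  then show ?thesis using in_subtree_adj[OF Rt _ a(2)] by blast
qed (use B1 in simp)

lemma in_subtree_if_reach:
  assumes Rt: "adj\<^sup>*\<^sup>* (Inl R) (Inl t)" and t: "t \<in> blocks E S" "x \<in> t" "x \<notin> parent_cuts R t"
    and reach: "reach E (S - parent_cuts R t) x y"
  shows "B \<in> blocks E S \<Longrightarrow> y \<in> B \<Longrightarrow> in_subtree R t (Inl B)"
  using reach
proof (induction arbitrary: B rule: rtranclp_induct)
  case base
  then show ?case using in_subtree_block_step[OF Rt t(1) in_subtree_self[OF Rt] t(2)] t(3) by blast
next
  case (step y z)
  then have yz: "E y z" "y \<in> S" "z \<in> S" "z \<notin> parent_cuts R t" by (simp_all add: induced_adj_iff)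
  obtain B' where B': "B' \<in> blocks E S" "y \<in> B'" "z \<in> B'" using edge_in_block[OF yz(1-3)] .
  show ?case using in_subtree_block_step[OF Rt B'(1) step.IH[OF B'(1,2)] B'(3) step.prems yz(4)] .
qed

lemma tdepth_less_if_in_subtree:
  assumes t: "t \<in> blocks E S" "R \<in> Rts" "adj\<^sup>*\<^sup>* (Inl t) (Inl R)"
    and t': "t' \<in> blocks E S" "in_subtree R t (Inl t')" "t' \<noteq> t"
  shows "tdepth E S Rts t < tdepth E S Rts t'"
proof -
  have Rt': "adj\<^sup>*\<^sup>* (Inl R) (Inl t')"
    and d: "level R (Inl t') = level R (Inl t) + rel_dist adj (Inl t) (Inl t')"
    using t'(2) by (simp_all add: in_subtree_def)
  have tt': "adj\<^sup>*\<^sup>* (Inl t) (Inl t')" using t(3) Rt' by (rule rtranclp_trans)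
  have "even (rel_dist adj (Inl t) (Inl t'))" "rel_dist adj (Inl t) (Inl t') \<noteq> 0"
    using bc_adj_relpowp_parity[OF relpowp_rel_dist[OF tt']] rel_dist_eq_0_iff[OF tt'] t'(3) by auto
  moreover have "even (level R (Inl t))"
    using level_even_iff_block[OF adj_rtranclp_sym[OF t(3)]] by simp
  ultimately have "level R (Inl t) div 2 < level R (Inl t') div 2" using d by (auto elim!: evenE)
  then show ?thesis using tdepth_eq_level t t'(1) adj_rtranclp_sym[OF Rt'] by simp
qed

lemma seg_root_eqI:
  assumes "t \<in> blocks E S" "I \<inter> t \<noteq> {}"
    and "\<And>t'. t' \<in> blocks E S \<Longrightarrow> I \<inter> t' \<noteq> {} \<Longrightarrow> t' \<noteq> t \<Longrightarrow>
      tdepth E S Rts t < tdepth E S Rts t'"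
  shows "seg_root E S Rts I = t"
  unfolding seg_root_def
proof (rule the_equality)
  fix t2
  assume "t2 \<in> blocks E S \<and> I \<inter> t2 \<noteq> {} \<and>
    (\<forall>t'\<in>blocks E S. I \<inter> t' \<noteq> {} \<and> t' \<noteq> t2 \<longrightarrow> tdepth E S Rts t2 < tdepth E S Rts t')"
  then show "t2 = t" using assms(1,2) assms(3)[of t2] by (metis less_asym)
qed (use assms in blast)

lemma seg_root_eq_if_avoids_parent_cuts:
  assumes I: "conn E I" "I \<subseteq> S" "I \<inter> parent_cuts R t = {}"
    and t: "t \<in> blocks E S" "I \<inter> t \<noteq> {}" "R \<in> Rts" "adj\<^sup>*\<^sup>* (Inl t) (Inl R)"
  shows "seg_root E S Rts I = t"
proof (rule seg_root_eqI[OF t(1,2)])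
  obtain x where x: "x \<in> I" "x \<in> t" using t(2) by blast
  fix t' assume t': "t' \<in> blocks E S" "I \<inter> t' \<noteq> {}" "t' \<noteq> t"
  then obtain y where y: "y \<in> I" "y \<in> t'" by blast
  have "reach E I x y" using I(1) x(1) y(1) unfolding conn_iff_reach by blast
  then have "reach E (S - parent_cuts R t) x y" by (rule reach_mono[rotated]) (use I in blast)
  then have "in_subtree R t (Inl t')"
    using in_subtree_if_reach[OF adj_rtranclp_sym[OF t(4)] t(1) x(2)] x(1) I(3) t' y by blast
  then show "tdepth E S Rts t < tdepth E S Rts t'"
    using tdepth_less_if_in_subtree[OF t(1,3,4) t'(1) _ t'(3)] by blast
qed

end

theorem lemma4p10:
  fixes V :: "'a set" and E :: "'a \<Rightarrow> 'a \<Rightarrow> bool" and Vs :: "nat \<Rightarrow> 'a set"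
    and l :: nat and Z :: "'a set" and Rts :: "'a set set" and I1 I2 :: "'a set"
  assumes "finite V"
    and "\<And>x y. E x y \<Longrightarrow> E y x"
    and "\<And>x y. E x y \<Longrightarrow> x \<in> V \<and> y \<in> V"
    and "\<And>x. \<not> E x x"
    and "(\<Union>i\<in>{1..l}. Vs i) = V"
    and "\<And>i j. i \<in> {1..l} \<Longrightarrow> j \<in> {1..l} \<Longrightarrow> i \<noteq> j \<Longrightarrow> Vs i \<inter> Vs j = {}"
    and "Z \<subseteq> V"
    and "roots_ok E (V - Z) Rts"
    and "is_segment E Vs l Z I1"
    and "is_segment E Vs l Z I2"
    and "I1 \<noteq> I2"
  shows "seg_body E (V - Z) Rts I1 \<inter> seg_body E (V - Z) Rts I2 = {}"
proof (rule ccontr)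
  interpret rooted_block_graph E "V - Z" Rts
    using assms(1,2,8) by unfold_locales auto
  have I1: "conn E I1" "I1 \<subseteq> V - Z" and I2: "conn E I2" "I2 \<subseteq> V - Z"
    using segment_conn_subset[OF assms(9,5)] segment_conn_subset[OF assms(10,5)] by auto
  assume "seg_body E (V - Z) Rts I1 \<inter> seg_body E (V - Z) Rts I2 \<noteq> {}"
  then obtain t where t: "t \<in> blocks E (V - Z)" "I1 \<inter> t \<noteq> {}" "I2 \<inter> t \<noteq> {}"
    "seg_root E (V - Z) Rts I1 \<noteq> t" "seg_root E (V - Z) Rts I2 \<noteq> t"
    unfolding seg_body_def by blast
  obtain R where R: "R \<in> Rts" "adj\<^sup>*\<^sup>* (Inl t) (Inl R)" using root_exists[OF t(1)] .
  have "I1 \<inter> parent_cuts R t \<noteq> {}"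
    using seg_root_eq_if_avoids_parent_cuts[OF I1 _ t(1,2) R] t(4) by auto
  then obtain v1 where v1: "v1 \<in> I1" "v1 \<in> parent_cuts R t" by blast
  have "I2 \<inter> parent_cuts R t \<noteq> {}"
    using seg_root_eq_if_avoids_parent_cuts[OF I2 _ t(1,3) R] t(5) by auto
  then obtain v2 where v2: "v2 \<in> I2" "v2 \<in> parent_cuts R t" by blast
  have "v1 = v2" using parent_cuts_unique[OF adj_rtranclp_sym[OF R(2)] v1(2) v2(2)] .
  with v1 v2 have "I1 \<inter> I2 \<noteq> {}" by blast
  with segments_disjoint[OF assms(6,9-11)] show False by contradiction
qed

end
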